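(* Let $\mathcal{F}(\mathsf{REG},\mathsf{REG})$ be the class of all languages $L(\Phi)$ generated by F-systems $\Phi=(L_1,L_2)$ in which both the core language $L_1$ and the folding procedure language $L_2$ are regular. Then $\mathcal{F}(\mathsf{REG},\mathsf{REG})\neq\mathsf{LIN}$; specifically, the linear language $L$ over $\{a,b,c,d,e,f,\#\}$ generated by the grammar $S\to S_1\mid S_2$, $S_1\to aS_1bc\mid a\#bc$, $S_2\to deS_2f\mid de\#f$ (that is, $L=\{a^n\#(bc)^n\mid n\ge1\}\cup\{(de)^n\#f^n\mid n\ge1\}$) is not in $\mathcal{F}(\mathsf{REG},\mathsf{REG})$.
   Context: Let $\Sigma$ be a finite alphabet and $\Gamma=\{\mathtt{u},\mathtt{d}\}$. Define $f:\Sigma^*\times\Sigma\times\Gamma\to\Sigma^*$ by $f(x,a,\mathtt{u})=ax$ and $f(x,a,\mathtt{d})=xa$. The folding function $h:\Sigma^*\times\Gamma^*\to\Sigma^*$ is the partial function with $h(\varepsilon,\varepsilon)=\varepsilon$; if $|w|=|v|>0$ with $w=w'a$ ($a\in\Sigma$) and $v=v'b$ ($b\in\Gamma$), then $h(w,v)=f(h(w',v'),a,b)$; and $h(w,v)$ is undefined if $|w|\neq|v|$. An F-system is a pair $\Phi=(L_1,L_2)$ with $L_1\subseteq\Sigma^*$ and $L_2\subseteq\Gamma^*$; its language is $L(\Phi)=\{h(w,v)\mid w\in L_1, v\in L_2, |w|=|v|\}$. A linear grammar is a context-free grammar all of whose rules have the form $A\to uBv$ or $A\to u$ with $u,v$ terminal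 words and $A,B$ nonterminals; $\mathsf{LIN}$ is the class of languages generated by linear grammars, and $\mathsf{REG}$ the class of regular languages. *)

theory Defs
  imports Main
begin

datatype 'a rexp = Zero | One | Atom 'a | Plus "'a rexp" "'a rexp"
  | Times "'a rexp" "'a rexp" | Star "'a rexp"

inductive_set star_lang :: "'a list set \<Rightarrow> 'a list set" for A where
  star_Nil: "[] \<in> star_lang A"
| star_app: "u \<in> A \<Longrightarrow> w \<in> star_lang A \<Longrightarrow> u @ w \<in> star_lang A"

fun rlang :: "'a rexp \<Rightarrow> 'a list set" where
  "rlang Zero = {}"
| "rlang One = {[]}"
| "rlang (Atom a) = {[a]}"
| "rlang (Plus r s) = rlang r \<union> rlang s"
| "rlang (Times r s) = {u @ v | u v. u \<in> rlang r \<and> v \<in> rlang s}"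
| "rlang (Star r) = star_lang (rlang r)"

definition regular :: "'a list set \<Rightarrow> bool" where
  "regular L \<longleftrightarrow> (\<exists>r. rlang r = L)"

datatype dir = Up | Down

fun fstep :: "'a list \<Rightarrow> 'a \<Rightarrow> dir \<Rightarrow> 'a list" where
  "fstep x a Up = a # x"
| "fstep x a Down = x @ [a]"

text \<open>The folding function h as a partial function: h(eps,eps)=eps,
  h(w'a, v'b) = f(h(w',v'), a, b), undefined on words of different length.\<close>
definition fold_h :: "'a list \<Rightarrow> dir list \<Rightarrow> 'a list option" where
  "fold_h w v = (if length w = length v
     then Some (foldl (\<lambda>x (a, b). fstep x a b) [] (zip w v)) else None)"

definition F_lang :: "'a list set \<Rightarrow> dir list set \<Rightarrow> 'a list set" where
  "F_lang L1 L2 = {the (fold_h w v) | w v. w \<in> L1 \<and> v \<in> L2 \<and> length w = length v}"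

definition F_REG_REG :: "'a list set set" where
  "F_REG_REG = {F_lang L1 L2 | L1 L2. regular L1 \<and> regular L2}"

text \<open>A rule (A, u, Some (B, v)) stands for A -> u B v, and (A, u, None) for A -> u.
  Nonterminals are natural numbers; a grammar is a finite set of rules and a start symbol.\<close>
type_synonym 't lin_rule = "nat \<times> 't list \<times> (nat \<times> 't list) option"

inductive lin_gen :: "'t lin_rule set \<Rightarrow> nat \<Rightarrow> 't list \<Rightarrow> bool" for R where
  term_rule: "(A, u, None) \<in> R \<Longrightarrow> lin_gen R A u"
| lin_rule: "(A, u, Some (B, v)) \<in> R \<Longrightarrow> lin_gen R B w \<Longrightarrow> lin_gen R A (u @ w @ v)"

definition lin_lang :: "'t lin_rule set \<Rightarrow> nat \<Rightarrow> 't list set" where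
  "lin_lang R S = {w. lin_gen R S w}"

definition LIN :: "'t list set set" where
  "LIN = {lin_lang R S | R S. finite R}"

datatype sym = a | b | c | d | e | f | Hash

text \<open>Grammar: S = 0, S1 = 1, S2 = 2.
  S -> S1 | S2,  S1 -> a S1 b c | a # b c,  S2 -> d e S2 f | d e # f\<close>
definition G :: "sym lin_rule set" where
  "G = {(0, [], Some (1, [])), (0, [], Some (2, [])),
        (1, [a], Some (1, [b, c])), (1, [a, Hash, b, c], None),
        (2, [d, e], Some (2, [f])), (2, [d, e, Hash, f], None)}"

definition L_ex :: "sym list set" where
  "L_ex = {replicate n a @ [Hash] @ concat (replicate n [b, c]) | n. n \<ge> 1}
        \<union> {concat (replicate n [d, e]) @ [Hash] @ replicate n f | n. n \<ge> 1}"

end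

theory Submission
  imports Defs "HOL-Library.Multiset"
begin

(* Suppose L_ex = L(L1, L2) with L1, L2 regular. Since both have finitely many left quotients,
   equally long words w of L1 and v of L2 can be pumped down synchronously: for some i < j <= N,
   deleting positions i..j-1 from both w and v stays inside L1 and L2.  The deleted factor of w
   consists of letters among the first N letters of w.  Every word of L_ex has as many a's as b's
   as c's and as many d's as e's as f's, so the first N letters of w cannot all be a's, nor all
   b's and c's, nor all d's and e's.
   Folding w along v puts the letters read with u, reversed, in front of those read with d, so
   the first N letters of w lie within distance N of the fold point k, the number of u's in v.
   For a^n#(bc)^n this forces n - N < k < n + 1 + N, for (de)^n#f^n it forces 2n - N < k.
   With n = 2N + 1, fold the core word of (de)^n#f^n along the folding procedure v of a^n#(bc)^n:
   the result lies in L_ex and has the letters of (de)^n#f^n, hence equals it, and the two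
   bounds on the number of u's in v contradict each other. *)

section \<open>Left quotients of regular languages\<close>

definition left_quotient :: "'a list \<Rightarrow> 'a list set \<Rightarrow> 'a list set" where
  "left_quotient u L = {y. u @ y \<in> L}"

definition quotients :: "'a list set \<Rightarrow> 'a list set set" where
  "quotients L = range (\<lambda>u. left_quotient u L)"

definition conc :: "'a list set \<Rightarrow> 'a list set \<Rightarrow> 'a list set" where
  "conc A B = {u @ v | u v. u \<in> A \<and> v \<in> B}"

lemma left_quotient_conc:
  "left_quotient u (conc A B) =
     conc (left_quotient u A) B \<union> \<Union> {left_quotient u2 B | u1 u2. u = u1 @ u2 \<and> u1 \<in> A}"
  (is "?L = ?R")
proof
  show "?L \<subseteq> ?R"
  proof
    fix y assume "y \<in> ?L"
    then obtain s t where st: "u @ y = s @ t" "s \<in> A" "t \<in> B"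
      by (auto simp: left_quotient_def conc_def)
    then consider us where "s = u @ us" "y = us @ t" | us where "u = s @ us" "us @ y = t"
      by (auto simp: append_eq_append_conv2)
    then show "y \<in> ?R"
    proof cases
      case 1
      then show ?thesis using st by (auto simp: left_quotient_def conc_def)
    next
      case 2
      then have "y \<in> left_quotient us B" using st by (simp add: left_quotient_def)
      then show ?thesis using 2 st(2) by blast
    qed
  qed
  show "?R \<subseteq> ?L"
    by (auto simp: left_quotient_def conc_def) (metis append.assoc)+
qed

lemma star_lang_append: "x \<in> star_lang A \<Longrightarrow> y \<in> star_lang A \<Longrightarrow> x @ y \<in> star_lang A"
  by (induction rule: star_lang.induct) (auto intro: star_lang.intros)

text \<open>Either the cut falls between two factors, or a factor \<open>u2 @ z\<close> straddles it.\<close>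

lemma star_lang_split:
  assumes "w \<in> star_lang A" and "w = u @ y"
  shows "(u \<in> star_lang A \<and> y \<in> star_lang A) \<or>
    (\<exists>u1 u2 z q. u = u1 @ u2 \<and> u1 \<in> star_lang A \<and> u2 @ z \<in> A \<and> q \<in> star_lang A \<and> y = z @ q)"
  using assms
proof (induction arbitrary: u rule: star_lang.induct)
  case star_Nil
  then show ?case by (auto intro: star_lang.intros)
next
  case (star_app s t)
  from star_app.prems consider us where "s = u @ us" "y = us @ t" | us where "u = s @ us" "us @ y = t"
    by (auto simp: append_eq_append_conv2)
  then show ?case
  proof cases
    case 1
    then show ?thesis using star_app by (metis self_append_conv2 star_lang.star_Nil)
  next
    case 2
    from star_app.IH[OF 2(2)[symmetric]] show ?thesis
    proof
      assume "us \<in> star_lang A \<and> y \<in> star_lang A"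
      then show ?thesis using 2 star_app by (auto intro: star_lang.intros)
    next
      assume "\<exists>u1 u2 z q. us = u1 @ u2 \<and> u1 \<in> star_lang A \<and> u2 @ z \<in> A \<and> q \<in> star_lang A \<and> y = z @ q"
      then obtain u1 u2 z q
        where "us = u1 @ u2" "u1 \<in> star_lang A" "u2 @ z \<in> A" "q \<in> star_lang A" "y = z @ q"
        by blast
      then show ?thesis using 2 star_app
        by (intro disjI2 exI[of _ "s @ u1"] exI[of _ u2] exI[of _ z] exI[of _ q])
          (auto intro: star_lang.intros)
    qed
  qed
qed

lemma left_quotient_star:
  "left_quotient u (star_lang A) = (if u \<in> star_lang A then star_lang A else {}) \<union>
     \<Union> ((\<lambda>X. conc X (star_lang A)) ` {left_quotient u2 A | u1 u2. u = u1 @ u2 \<and> u1 \<in> star_lang A})"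
  (is "?L = ?R")
proof
  show "?L \<subseteq> ?R"
  proof
    fix y assume "y \<in> ?L"
    then have "u @ y \<in> star_lang A" by (simp add: left_quotient_def)
    from star_lang_split[OF this refl] show "y \<in> ?R"
      by (auto simp: left_quotient_def conc_def)
  qed
  show "?R \<subseteq> ?L"
  proof
    fix y assume y: "y \<in> ?R"
    show "y \<in> ?L"
    proof (cases "u \<in> star_lang A \<and> y \<in> star_lang A")
      case True
      then show ?thesis by (simp add: left_quotient_def star_lang_append)
    next
      case False
      with y obtain u1 u2 z q where "u = u1 @ u2" "u1 \<in> star_lang A" "u2 @ z \<in> A"
          "q \<in> star_lang A" "y = z @ q"
        by (auto simp: left_quotient_def conc_def split: if_splits)
      then show ?thesis
        by (simp add: left_quotient_def) (metis append.assoc star_lang_append star_lang.star_app)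
    qed
  qed
qed

lemma finite_quotients_Un:
  assumes "finite (quotients A)" and "finite (quotients B)"
  shows "finite (quotients (A \<union> B))"
proof (rule finite_subset)
  have "left_quotient u (A \<union> B) = left_quotient u A \<union> left_quotient u B" for u
    by (auto simp: left_quotient_def)
  then show "quotients (A \<union> B) \<subseteq> (\<lambda>(X, Y). X \<union> Y) ` (quotients A \<times> quotients B)"
    by (auto simp: quotients_def)
  show "finite ((\<lambda>(X, Y). X \<union> Y) ` (quotients A \<times> quotients B))"
    using assms by simp
qed

lemma finite_quotients_conc:
  assumes "finite (quotients A)" and "finite (quotients B)"
  shows "finite (quotients (conc A B))"
proof (rule finite_subset)
  let ?f = "\<lambda>(X, Ys). conc X B \<union> \<Union> Ys"
  show "quotients (conc A B) \<subseteq> ?f ` (quotients A \<times> Pow (quotients B))"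
  proof
    fix Z assume "Z \<in> quotients (conc A B)"
    then obtain u where u: "Z = left_quotient u (conc A B)" by (auto simp: quotients_def)
    let ?Ys = "{left_quotient u2 B | u1 u2. u = u1 @ u2 \<and> u1 \<in> A}"
    have "Z = ?f (left_quotient u A, ?Ys)" by (simp add: u left_quotient_conc)
    moreover have "(left_quotient u A, ?Ys) \<in> quotients A \<times> Pow (quotients B)"
      by (auto simp: quotients_def)
    ultimately show "Z \<in> ?f ` (quotients A \<times> Pow (quotients B))" by (rule image_eqI)
  qed
  show "finite (?f ` (quotients A \<times> Pow (quotients B)))"
    using assms by simp
qed

lemma finite_quotients_star_lang:
  assumes "finite (quotients A)"
  shows "finite (quotients (star_lang A))"
proof (rule finite_subset)
  let ?S = "star_lang A"
  let ?f = "\<lambda>(e, Ys). (if e then ?S else {}) \<union> \<Union> ((\<lambda>X. conc X ?S) ` Ys)"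
  show "quotients ?S \<subseteq> ?f ` (UNIV \<times> Pow (quotients A))"
  proof
    fix Z assume "Z \<in> quotients ?S"
    then obtain u where u: "Z = left_quotient u ?S" by (auto simp: quotients_def)
    let ?Ys = "{left_quotient u2 A | u1 u2. u = u1 @ u2 \<and> u1 \<in> ?S}"
    have "Z = ?f (u \<in> ?S, ?Ys)" by (simp only: u left_quotient_star prod.case)
    moreover have "(u \<in> ?S, ?Ys) \<in> UNIV \<times> Pow (quotients A)"
      by (auto simp: quotients_def)
    ultimately show "Z \<in> ?f ` (UNIV \<times> Pow (quotients A))" by (rule image_eqI)
  qed
  show "finite (?f ` (UNIV \<times> Pow (quotients A)))"
    using assms by simp
qed

lemma finite_quotients_rlang: "finite (quotients (rlang r))"
proof (induction r)
  case Zero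
  have "quotients (rlang Zero) \<subseteq> {{}}" by (auto simp: quotients_def left_quotient_def)
  then show ?case using finite_subset by blast
next
  case One
  have "quotients (rlang One) \<subseteq> {{[]}, {}}" by (auto simp: quotients_def left_quotient_def)
  then show ?case using finite_subset by blast
next
  case (Atom x)
  have "left_quotient u {[x]} = (if u = [] then {[x]} else if u = [x] then {[]} else {})" for u
    by (auto simp: left_quotient_def append_eq_Cons_conv)
  then have "quotients (rlang (Atom x)) \<subseteq> {{[x]}, {[]}, {}}"
    by (auto simp: quotients_def)
  then show ?case using finite_subset by blast
next
  case (Plus r s)
  then show ?case using finite_quotients_Un by simp
next
  case (Times r s)
  have "rlang (Times r s) = conc (rlang r) (rlang s)" by (simp add: conc_def)
  then show ?case using finite_quotients_conc Times.IH by simp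
next
  case (Star r)
  then show ?case using finite_quotients_star_lang by simp
qed

lemma regular_finite_quotients: "regular L \<Longrightarrow> finite (quotients L)"
  using finite_quotients_rlang unfolding regular_def by blast

section \<open>Synchronous pumping down\<close>

lemma synchronous_pumping_down:
  assumes "finite (quotients L1)" and "finite (quotients L2)"
  obtains N where "\<And>w v. w \<in> L1 \<Longrightarrow> v \<in> L2 \<Longrightarrow> N \<le> length w \<Longrightarrow> N \<le> length v \<Longrightarrow>
    \<exists>i j. i < j \<and> j \<le> N \<and> take i w @ drop j w \<in> L1 \<and> take i v @ drop j v \<in> L2"
proof
  let ?N = "card (quotients L1 \<times> quotients L2)"
  fix w v assume w: "w \<in> L1" "?N \<le> length w" and v: "v \<in> L2" "?N \<le> length v"
  define g where "g i = (left_quotient (take i w) L1, left_quotient (take i v) L2)" for i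
  have "g ` {0..?N} \<subseteq> quotients L1 \<times> quotients L2"
    by (auto simp: g_def quotients_def)
  moreover have "finite (quotients L1 \<times> quotients L2)"
    using assms by simp
  ultimately have "\<not> inj_on g {0..?N}"
    using card_inj_on_le[of g "{0..?N}" "quotients L1 \<times> quotients L2"] by auto
  then obtain i' j' where "i' \<le> ?N" "j' \<le> ?N" "i' \<noteq> j'" "g i' = g j'"
    by (auto simp: inj_on_def)
  then obtain i j where ij: "i < j" "j \<le> ?N" "g i = g j"
    by (cases "i' < j'") (auto simp: not_less_iff_gr_or_eq)
  have "left_quotient (take j w) L1 = left_quotient (take i w) L1"
    and "left_quotient (take j v) L2 = left_quotient (take i v) L2"
    using ij(3) by (simp_all add: g_def)
  moreover have "drop j w \<in> left_quotient (take j w) L1" "drop j v \<in> left_quotient (take j v) L2"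
    using w v by (simp_all add: left_quotient_def)
  ultimately have "take i w @ drop j w \<in> L1" "take i v @ drop j v \<in> L2"
    by (simp_all add: left_quotient_def)
  then show "\<exists>i j. i < j \<and> j \<le> ?N \<and> take i w @ drop j w \<in> L1 \<and> take i v @ drop j v \<in> L2"
    using ij by blast
qed

definition ups :: "'a list \<Rightarrow> dir list \<Rightarrow> 'a list" where
  "ups w v = map fst (filter (\<lambda>p. snd p = Up) (zip w v))"

definition downs :: "'a list \<Rightarrow> dir list \<Rightarrow> 'a list" where
  "downs w v = map fst (filter (\<lambda>p. snd p = Down) (zip w v))"

lemma ups_Cons [simp]:
  "ups (x # w) (Up # v) = x # ups w v" "ups (x # w) (Down # v) = ups w v"
  by (simp_all add: ups_def)

lemma downs_Cons [simp]:
  "downs (x # w) (Up # v) = downs w v" "downs (x # w) (Down # v) = x # downs w v"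
  by (simp_all add: downs_def)

lemma fold_h_eq:
  assumes "length w = length v"
  shows "fold_h w v = Some (rev (ups w v) @ downs w v)"
proof -
  have "foldl (\<lambda>x (a, b). fstep x a b) [] zs =
      rev (map fst (filter (\<lambda>p. snd p = Up) zs)) @ map fst (filter (\<lambda>p. snd p = Down) zs)" for zs
  proof (induction zs rule: rev_induct)
    case (snoc p zs)
    then show ?case by (cases p; cases "snd p") auto
  qed simp
  then show ?thesis
    using assms by (simp add: fold_h_def ups_def downs_def)
qed

lemma mset_fold: "length w = length v \<Longrightarrow> mset (rev (ups w v) @ downs w v) = mset w"
proof (induction w v rule: list_induct2)
  case Nil
  then show ?case by (simp add: ups_def downs_def)
next
  case (Cons x w y v)
  then show ?case by (cases y) simp_all
qed

lemma length_fold: "length w = length v \<Longrightarrow> length (rev (ups w v) @ downs w v) = length w"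
  by (metis mset_fold size_mset)

lemma length_ups: "length w = length v \<Longrightarrow> length (ups w v) = count_list v Up"
proof (induction w v rule: list_induct2)
  case Nil
  then show ?case by (simp add: ups_def)
next
  case (Cons x w y v)
  then show ?case by (cases y) simp_all
qed

lemma set_take_subset_ups_downs:
  "length w = length v \<Longrightarrow> set (take N w) \<subseteq> set (take N (ups w v)) \<union> set (take N (downs w v))"
proof (induction w v arbitrary: N rule: list_induct2)
  case Nil
  then show ?case by simp
next
  case (Cons x w y v)
  show ?case
  proof (cases N)
    case (Suc M)
    have "set (take M (ups w v)) \<subseteq> set (take N (ups w v))"
      and "set (take M (downs w v)) \<subseteq> set (take N (downs w v))"
      using Suc by (simp_all add: set_take_subset_set_take)
    then show ?thesis using Cons.IH[of M] Suc by (cases y) auto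
  qed simp
qed

lemma drop_take_rev_append:
  "drop (length U - N) (take (length U + N) (rev U @ D)) = rev (take N U) @ take N D"
  by (cases "N \<le> length U") (simp_all add: drop_rev)

lemma set_take_subset_fold_window:
  assumes "length w = length v" and "k = length (ups w v)"
  shows "set (take N w) \<subseteq> set (drop (k - N) (take (k + N) (rev (ups w v) @ downs w v)))"
  using set_take_subset_ups_downs[OF assms(1)] unfolding assms(2) drop_take_rev_append by auto

lemma length_concat_replicate: "length (concat (replicate n xs)) = n * length xs"
  by (induction n) auto

lemma set_concat_replicate_subset: "set (concat (replicate n xs)) \<subseteq> set xs"
  by (induction n) auto

lemma count_mset_concat_replicate:
  "count (mset (concat (replicate n xs))) x = n * count (mset xs) x"
  by (induction n) auto

definition word_abc :: "nat \<Rightarrow> sym list" where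
  "word_abc n = replicate n a @ [Hash] @ concat (replicate n [b, c])"

definition word_def :: "nat \<Rightarrow> sym list" where
  "word_def n = concat (replicate n [d, e]) @ [Hash] @ replicate n f"

lemma L_ex_eq: "L_ex = {word_abc n | n. n \<ge> 1} \<union> {word_def n | n. n \<ge> 1}"
  by (simp add: L_ex_def word_abc_def word_def_def)

lemma word_abc_in_L_ex: "n \<ge> 1 \<Longrightarrow> word_abc n \<in> L_ex"
  by (auto simp: L_ex_eq)

lemma word_def_in_L_ex: "n \<ge> 1 \<Longrightarrow> word_def n \<in> L_ex"
  by (auto simp: L_ex_eq)

lemma length_word_abc: "length (word_abc n) = 3 * n + 1"
  by (simp add: word_abc_def length_concat_replicate)

lemma length_word_def: "length (word_def n) = 3 * n + 1"
  by (simp add: word_def_def length_concat_replicate)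

lemma count_mset_word_abc:
  "count (mset (word_abc n)) s = (if s \<in> {a, b, c} then n else if s = Hash then 1 else 0)"
  by (cases s) (simp_all add: word_abc_def count_mset_concat_replicate)

lemma count_mset_word_def:
  "count (mset (word_def n)) s = (if s \<in> {d, e, f} then n else if s = Hash then 1 else 0)"
  by (cases s) (simp_all add: word_def_def count_mset_concat_replicate)

lemma inj_on_mset_L_ex: "inj_on mset L_ex"
proof
  fix x y assume "x \<in> L_ex" "y \<in> L_ex" and xy: "mset x = mset y"
  from xy have "count (mset x) a = count (mset y) a" "count (mset x) d = count (mset y) d"
    by simp_all
  with \<open>x \<in> L_ex\<close> \<open>y \<in> L_ex\<close> show "x = y"
    by (auto simp: L_ex_eq count_mset_word_abc count_mset_word_def)
qed

definition balanced :: "sym multiset \<Rightarrow> bool" where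
  "balanced M \<longleftrightarrow> count M a = count M b \<and> count M b = count M c \<and>
     count M d = count M e \<and> count M e = count M f"

lemma balanced_L_ex: "x \<in> L_ex \<Longrightarrow> balanced (mset x)"
  by (auto simp: L_ex_eq balanced_def count_mset_word_abc count_mset_word_def)

lemma balanced_diff: "balanced (M + K) \<Longrightarrow> balanced M \<Longrightarrow> balanced K"
  by (simp add: balanced_def)

lemma balanced_eq_Nil:
  assumes "balanced (mset z)" and "set z \<subseteq> S" and "S \<in> {{a}, {b, c}, {d, e}}"
  shows "z = []"
proof -
  have "finite S" using assms(3) by auto
  then have "length z = (\<Sum>s\<in>S. count (mset z) s)"
    using sum_count_set[OF assms(2)] by (simp add: count_mset)
  also have "\<dots> = 0"
  proof -
    have outside: "count (mset z) s = 0" if "s \<notin> S" for s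
      using assms(2) that by auto
    show ?thesis
      using assms(1,3) outside[of a] outside[of b] outside[of d] outside[of f] unfolding balanced_def
      by (auto simp del: count_mset_0_iff)
  qed
  finally show ?thesis by simp
qed

section \<open>L_ex is not generated by an F-system with regular components\<close>

locale F_system_of_L_ex =
  fixes L1 :: "sym list set" and L2 :: "dir list set" and N :: nat
  assumes F_lang_eq: "F_lang L1 L2 = L_ex"
    and pumping_down: "\<And>w v. w \<in> L1 \<Longrightarrow> v \<in> L2 \<Longrightarrow> N \<le> length w \<Longrightarrow> N \<le> length v \<Longrightarrow>
      \<exists>i j. i < j \<and> j \<le> N \<and> take i w @ drop j w \<in> L1 \<and> take i v @ drop j v \<in> L2"
begin

lemma fold_in_L_ex:
  assumes "w \<in> L1" and "v \<in> L2" and "length w = length v"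
  shows "rev (ups w v) @ downs w v \<in> L_ex"
proof -
  have "the (fold_h w v) \<in> F_lang L1 L2"
    using assms unfolding F_lang_def by blast
  then show ?thesis using assms(3) by (simp add: F_lang_eq fold_h_eq)
qed

lemma L_ex_obtain_fold:
  assumes "x \<in> L_ex"
  obtains w v where "w \<in> L1" "v \<in> L2" "length w = length v" "rev (ups w v) @ downs w v = x"
proof -
  from assms obtain w v where "w \<in> L1" "v \<in> L2" "length w = length v" "the (fold_h w v) = x"
    unfolding F_lang_eq[symmetric] F_lang_def by blast
  then show thesis using that by (simp add: fold_h_eq)
qed

lemma prefix_not_uniform:
  assumes w: "w \<in> L1" and v: "v \<in> L2" and wv: "length w = length v" and N: "N \<le> length w"
    and S: "set (take N w) \<subseteq> S" "S \<in> {{a}, {b, c}, {d, e}}"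
  shows False
proof -
  obtain i j where ij: "i < j" "j \<le> N"
    and L1: "take i w @ drop j w \<in> L1" and L2: "take i v @ drop j v \<in> L2"
    using pumping_down[OF w v N] N wv by auto
  define z where "z = drop i (take j w)"
  have "take j w = take i w @ z"
    using ij unfolding z_def by (metis append_take_drop_id less_imp_le min.absorb1 take_take)
  then have "w = take i w @ z @ drop j w"
    by (metis append.assoc append_take_drop_id)
  then have split: "mset w = mset (take i w @ drop j w) + mset z"
    by (metis mset_append add.commute add.left_commute)
  have wv': "length (take i w @ drop j w) = length (take i v @ drop j v)"
    using ij N wv by simp
  have "balanced (mset w)"
    using balanced_L_ex[OF fold_in_L_ex[OF w v wv]] unfolding mset_fold[OF wv] .
  then have "balanced (mset (take i w @ drop j w) + mset z)"
    unfolding split .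
  moreover have "balanced (mset (take i w @ drop j w))"
    using balanced_L_ex[OF fold_in_L_ex[OF L1 L2 wv']] unfolding mset_fold[OF wv'] .
  ultimately have "balanced (mset z)" by (rule balanced_diff)
  moreover have "set z \<subseteq> S"
  proof -
    have "set z \<subseteq> set (take j w)" unfolding z_def by (rule set_drop_subset)
    also have "\<dots> \<subseteq> set (take N w)" using ij(2) by (rule set_take_subset_set_take)
    finally show ?thesis using S(1) by blast
  qed
  ultimately have "z = []" using S(2) by (rule balanced_eq_Nil)
  then show False using ij N by (simp add: z_def)
qed

lemma fold_window_not_uniform:
  assumes w: "w \<in> L1" and v: "v \<in> L2" and wv: "length w = length v" and N: "N \<le> length w"
    and S: "set (drop (length (ups w v) - N) (take (length (ups w v) + N) (rev (ups w v) @ downs w v)))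
        \<subseteq> S"
      "S \<in> {{a}, {b, c}, {d, e}}"
  shows False
proof -
  have "set (take N w) \<subseteq> S"
    using set_take_subset_fold_window[OF wv refl, of N] S(1) by blast
  then show False using prefix_not_uniform[OF w v wv N] S(2) by blast
qed

lemma ups_bounds_word_abc:
  assumes w: "w \<in> L1" and v: "v \<in> L2" and wv: "length w = length v"
    and x: "rev (ups w v) @ downs w v = word_abc n"
  shows "n < length (ups w v) + N" and "length (ups w v) < n + 1 + N"
proof -
  let ?k = "length (ups w v)"
  let ?window = "set (drop (?k - N) (take (?k + N) (word_abc n)))"
  have len: "length w = 3 * n + 1"
    using length_fold[OF wv] x length_word_abc by simp
  have k_le: "?k \<le> length w"
    using length_ups[OF wv] count_le_length[of v Up] wv by simp
  show "n < ?k + N"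
  proof (rule ccontr)
    assume small: "\<not> n < ?k + N"
    have "?window \<subseteq> set (take (?k + N) (word_abc n))" by (rule set_drop_subset)
    also have "\<dots> \<subseteq> set (take n (word_abc n))"
      using small by (simp add: set_take_subset_set_take)
    also have "\<dots> \<subseteq> {a}" by (auto simp: word_abc_def)
    finally have "?window \<subseteq> {a}" .
    moreover have "N \<le> length w" using small len by simp
    ultimately show False using fold_window_not_uniform[OF w v wv, of "{a}"] x by simp
  qed
  show "?k < n + 1 + N"
  proof (rule ccontr)
    assume large: "\<not> ?k < n + 1 + N"
    have "?window \<subseteq> set (drop (?k - N) (word_abc n))"
      by (simp add: drop_take set_take_subset)
    also have "\<dots> \<subseteq> set (drop (n + 1) (word_abc n))"
      using large by (simp add: set_drop_subset_set_drop)
    also have "\<dots> \<subseteq> {b, c}"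
      using set_concat_replicate_subset[of n "[b, c]"] by (simp add: word_abc_def)
    finally have "?window \<subseteq> {b, c}" .
    moreover have "N \<le> length w" using large k_le by simp
    ultimately show False using fold_window_not_uniform[OF w v wv, of "{b, c}"] x by simp
  qed
qed

lemma ups_bound_word_def:
  assumes w: "w \<in> L1" and v: "v \<in> L2" and wv: "length w = length v"
    and x: "rev (ups w v) @ downs w v = word_def n"
  shows "2 * n < length (ups w v) + N"
proof (rule ccontr)
  let ?k = "length (ups w v)"
  let ?window = "set (drop (?k - N) (take (?k + N) (word_def n)))"
  assume small: "\<not> 2 * n < ?k + N"
  have "?window \<subseteq> set (take (?k + N) (word_def n))" by (rule set_drop_subset)
  also have "\<dots> \<subseteq> set (take (2 * n) (word_def n))"
    using small by (simp add: set_take_subset_set_take)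
  also have "\<dots> \<subseteq> {d, e}"
    using set_concat_replicate_subset[of n "[d, e]"]
    by (simp add: word_def_def length_concat_replicate)
  finally have "?window \<subseteq> {d, e}" .
  moreover have "N \<le> length w"
    using small length_fold[OF wv] x length_word_def[of n] by simp
  ultimately show False using fold_window_not_uniform[OF w v wv, of "{d, e}"] x by simp
qed

lemma inconsistent: False
proof -
  define n where "n = 2 * N + 1"
  have n: "n \<ge> 1" by (simp add: n_def)
  obtain w1 v1 where 1: "w1 \<in> L1" "v1 \<in> L2" "length w1 = length v1"
      "rev (ups w1 v1) @ downs w1 v1 = word_abc n"
    by (rule L_ex_obtain_fold[OF word_abc_in_L_ex[OF n]])
  obtain w2 v2 where 2: "w2 \<in> L1" "v2 \<in> L2" "length w2 = length v2"
      "rev (ups w2 v2) @ downs w2 v2 = word_def n"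
    by (rule L_ex_obtain_fold[OF word_def_in_L_ex[OF n]])
  have wv: "length w2 = length v1"
    using length_fold[OF 1(3)] length_fold[OF 2(3)] 1(3) 1(4) 2(4)
    by (simp add: length_word_abc length_word_def)
  have "mset (rev (ups w2 v1) @ downs w2 v1) = mset (word_def n)"
    using mset_fold[OF wv] mset_fold[OF 2(3)] 2(4) by simp
  then have "rev (ups w2 v1) @ downs w2 v1 = word_def n"
    by (rule inj_onD[OF inj_on_mset_L_ex _ fold_in_L_ex[OF 2(1) 1(2) wv] word_def_in_L_ex[OF n]])
  then have "2 * n < length (ups w2 v1) + N"
    using ups_bound_word_def[OF 2(1) 1(2) wv] by simp
  moreover have "length (ups w1 v1) < n + 1 + N"
    using ups_bounds_word_abc(2)[OF 1] .
  moreover have "length (ups w1 v1) = length (ups w2 v1)"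
    using length_ups[OF 1(3)] length_ups[OF wv] by simp
  ultimately show False by (simp add: n_def)
qed

end

lemma L_ex_not_F_REG_REG: "L_ex \<notin> F_REG_REG"
proof
  assume "L_ex \<in> F_REG_REG"
  then obtain L1 L2 where L1: "regular L1" and L2: "regular L2" and eq: "F_lang L1 L2 = L_ex"
    unfolding F_REG_REG_def by blast
  obtain N where "\<And>w v. w \<in> L1 \<Longrightarrow> v \<in> L2 \<Longrightarrow> N \<le> length w \<Longrightarrow> N \<le> length v \<Longrightarrow>
      \<exists>i j. i < j \<and> j \<le> N \<and> take i w @ drop j w \<in> L1 \<and> take i v @ drop j v \<in> L2"
    using synchronous_pumping_down[OF regular_finite_quotients[OF L1] regular_finite_quotients[OF L2]]
    by blast
  with eq interpret F_system_of_L_ex L1 L2 N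
    by unfold_locales
  show False by (rule inconsistent)
qed

section \<open>L_ex is linear\<close>

lemma word_abc_Suc: "a # word_abc n @ [b, c] = word_abc (Suc n)"
  by (simp add: word_abc_def replicate_append_same[symmetric])

lemma word_def_Suc: "[d, e] @ word_def n @ [f] = word_def (Suc n)"
  by (simp add: word_def_def replicate_append_same)

lemma lin_gen_G_sound:
  "lin_gen G A w \<Longrightarrow> (A = 0 \<longrightarrow> w \<in> L_ex) \<and> (A = 1 \<longrightarrow> (\<exists>n\<ge>1. w = word_abc n)) \<and>
     (A = 2 \<longrightarrow> (\<exists>n\<ge>1. w = word_def n))"
proof (induction rule: lin_gen.induct)
  case (term_rule A u)
  then show ?case
    by (auto simp: G_def word_abc_def word_def_def intro: exI[of _ 1])
next
  case (lin_rule A u B v w)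
  from lin_rule.hyps consider
      "A = 0" "u = []" "B = 1" "v = []" | "A = 0" "u = []" "B = 2" "v = []"
    | "A = 1" "u = [a]" "B = 1" "v = [b, c]" | "A = 2" "u = [d, e]" "B = 2" "v = [f]"
    by (auto simp: G_def)
  then show ?case
  proof cases
    case 3
    then obtain n where "n \<ge> 1" "w = word_abc n" using lin_rule.IH by auto
    then show ?thesis using 3 word_abc_Suc[of n] by auto
  next
    case 4
    then obtain n where "n \<ge> 1" "w = word_def n" using lin_rule.IH by auto
    then show ?thesis using 4 word_def_Suc[of n] by auto
  qed (use lin_rule.IH in \<open>auto simp: L_ex_eq\<close>)
qed

lemma lin_gen_G_word_abc: "n \<ge> 1 \<Longrightarrow> lin_gen G 1 (word_abc n)"
proof (induction n rule: nat_induct_at_least)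
  case base
  have "lin_gen G 1 [a, Hash, b, c]" by (rule term_rule) (simp add: G_def)
  then show ?case by (simp add: word_abc_def)
next
  case (Suc n)
  have "lin_gen G 1 ([a] @ word_abc n @ [b, c])"
    by (rule lin_rule[OF _ Suc.IH]) (simp add: G_def)
  then show ?case by (simp add: word_abc_Suc)
qed

lemma lin_gen_G_word_def: "n \<ge> 1 \<Longrightarrow> lin_gen G 2 (word_def n)"
proof (induction n rule: nat_induct_at_least)
  case base
  have "lin_gen G 2 [d, e, Hash, f]" by (rule term_rule) (simp add: G_def)
  then show ?case by (simp add: word_def_def)
next
  case (Suc n)
  have "lin_gen G 2 ([d, e] @ word_def n @ [f])"
    by (rule lin_rule[OF _ Suc.IH]) (simp add: G_def)
  then show ?case by (simp only: word_def_Suc)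
qed

lemma lin_lang_G: "lin_lang G 0 = L_ex"
proof
  show "lin_lang G 0 \<subseteq> L_ex"
    using lin_gen_G_sound unfolding lin_lang_def by blast
  show "L_ex \<subseteq> lin_lang G 0"
  proof
    fix w assume "w \<in> L_ex"
    then consider n where "n \<ge> 1" "w = word_abc n" | n where "n \<ge> 1" "w = word_def n"
      unfolding L_ex_eq by blast
    then have "lin_gen G 0 ([] @ w @ [])"
    proof cases
      case 1
      then have "lin_gen G 1 w" using lin_gen_G_word_abc by blast
      then show ?thesis by (rule lin_rule[rotated]) (simp add: G_def)
    next
      case 2
      then have "lin_gen G 2 w" using lin_gen_G_word_def by blast
      then show ?thesis by (rule lin_rule[rotated]) (simp add: G_def)
    qed
    then show "w \<in> lin_lang G 0" by (simp add: lin_lang_def)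
  qed
qed

lemma L_ex_LIN: "L_ex \<in> LIN"
proof -
  have "finite G" by (simp add: G_def)
  then show ?thesis unfolding LIN_def using lin_lang_G by blast
qed

theorem theorem2:
  shows "lin_lang G 0 = L_ex \<and> L_ex \<in> LIN \<and> L_ex \<notin> (F_REG_REG :: sym list set set)
         \<and> (F_REG_REG :: sym list set set) \<noteq> LIN"
  using lin_lang_G L_ex_LIN L_ex_not_F_REG_REG by blast

end
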